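(* Let $G>0$, $T>0$, and let $F\colon\mathbb R\to\mathbb R$ be continuous and $T$-periodic. There exists $a_0\in(0,1)$ such that for every $a$ with $a_0\le a<1$, the set $\mathbb R\times\Gamma_a$ is a bound set for $v_\lambda$ for all $\lambda\in[0,1]$.
   Context: For $\lambda\in[0,1]$ consider on $\mathbb R\times\Omega$, $\Omega=(-1,1)\times\mathbb R$, the system $\dot t=1$, $\dot x=p$, $\dot p=\big(G\sqrt{1-x^2}-\frac{p^2}{1-x^2}\big)x-\lambda(1-x^2)F(t)$, with right-hand side $v_\lambda(t,x,p)$; its solutions are unique, giving a local flow $\phi^\lambda$. For $0<a<1$, $\Gamma_a=\{(x,p)\in\mathbb R^2:|x|\le a\}$. For a closed set $E\subset\mathbb R\times\Omega$, $E$ is a bound set for $v_\lambda$ if for every $\epsilon>0$ there is no point $z\in\partial E$ with $\phi^\lambda_s(z)\in E$ for all $s\in(-\epsilon,\epsilon)$. *)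

theory Defs
  imports "HOL-Analysis.Analysis"
begin

definition vfield :: "real \<Rightarrow> (real \<Rightarrow> real) \<Rightarrow> real \<Rightarrow> real \<times> real \<times> real \<Rightarrow> real \<times> real \<times> real" where
  "vfield G F lam = (\<lambda>(t, x, p).
     (1, p, (G * sqrt (1 - x\<^sup>2) - p\<^sup>2 / (1 - x\<^sup>2)) * x - lam * (1 - x\<^sup>2) * F t))"

definition Omega :: "(real \<times> real) set" where
  "Omega = {(x, p). -1 < x \<and> x < 1}"

definition Gamma :: "real \<Rightarrow> (real \<times> real) set" where
  "Gamma a = {(x, p). \<bar>x\<bar> \<le> a}"

definition is_solution :: "('a::real_normed_vector \<Rightarrow> 'a) \<Rightarrow> 'a set \<Rightarrow> (real \<Rightarrow> 'a) \<Rightarrow> real set \<Rightarrow> bool" where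
  "is_solution v D y I \<longleftrightarrow>
     (\<forall>s\<in>I. y s \<in> D \<and> (y has_vector_derivative v (y s)) (at s within I))"

text \<open>Bound set: since solutions are unique, "phi_s(z) \<in> E for all s in (-eps,eps)"
  means exactly that the solution through z exists on (-eps,eps) and stays in E.\<close>
definition bound_set :: "('a::real_normed_vector \<Rightarrow> 'a) \<Rightarrow> 'a set \<Rightarrow> 'a set \<Rightarrow> bool" where
  "bound_set v D E \<longleftrightarrow> closed E \<and>
     (\<forall>\<epsilon>>0. \<not> (\<exists>z\<in>frontier E. \<exists>y. is_solution v D y {-\<epsilon><..<\<epsilon>} \<and> y 0 = z \<and>
                                 (\<forall>s\<in>{-\<epsilon><..<\<epsilon>}. y s \<in> E)))"

end

theory Submission
  imports Defs "HOL-Library.Periodic_Fun"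
begin

(* On the boundary |x| = a of the strip, a solution through (t, x, p) has (x^2)' = 2 x p and,
   when p = 0, (x^2)'' = 2 x x'' = 2 s (G a^2 - s x lam F t) with s = sqrt (1 - a^2).
   Since F is continuous and periodic it is bounded, so this is positive once a is close to 1.
   Thus x^2 is either strictly monotone at time 0 or has a strict local minimum there; in either
   case it exceeds a^2 arbitrarily close to time 0, so the solution leaves the strip. *)

lemma periodic_continuous_bounded:
  fixes F :: "real \<Rightarrow> 'a::real_normed_vector"
  assumes "T > 0" "continuous_on UNIV F" "\<And>t. F (t + T) = F t"
  shows "bounded (range F)"
proof -
  interpret periodic_fun_simple F T by standard (rule assms(3))
  have "F t \<in> F ` {0..T}" for t
  proof -
    define k where "k = \<lfloor>t / T\<rfloor>"
    have "real_of_int k * T \<le> t" "t \<le> (real_of_int k + 1) * T"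
      using assms(1) floor_divide_lower[of T t] floor_divide_upper[of T t] by (auto simp: k_def)
    then have "t - of_int k * T \<in> {0..T}" by (auto simp: algebra_simps)
    moreover have "F t = F (t - of_int k * T)" using minus_of_int[of t k] by simp
    ultimately show ?thesis by blast
  qed
  then have "range F \<subseteq> F ` {0..T}" by blast
  moreover have "compact (F ` {0..T})"
    using assms(2) by (intro compact_continuous_image) (auto intro: continuous_on_subset)
  ultimately show ?thesis using bounded_subset compact_imp_bounded by blast
qed

lemma frontier_sublevel_subset:
  fixes g :: "'a::topological_space \<Rightarrow> real"
  assumes "continuous_on UNIV g"
  shows "frontier {z. g z \<le> a} \<subseteq> {z. g z = a}"
proof -
  have "closure {z. g z \<le> a} = {z. g z \<le> a}"
    using assms by (intro closure_closed closed_Collect_le continuous_intros) auto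
  moreover have "{z. g z < a} \<subseteq> interior {z. g z \<le> a}"
    using assms by (intro interior_maximal open_Collect_less continuous_intros) auto
  ultimately show ?thesis by (force simp: frontier_def)
qed

lemma DERIV2_not_local_max:
  fixes X X' X'' :: "real \<Rightarrow> real" and e :: real
  assumes "e > 0"
    and X': "\<And>s. s \<in> {-e<..<e} \<Longrightarrow> (X has_real_derivative X' s) (at s)"
    and X'': "\<And>s. s \<in> {-e<..<e} \<Longrightarrow> (X' has_real_derivative X'' s) (at s)"
    and critical: "X' 0 = 0 \<Longrightarrow> X'' 0 > 0"
  shows "\<exists>s\<in>{-e<..<e}. X s > X 0"
proof -
  have "0 \<in> {-e<..<e}" using \<open>e > 0\<close> by auto
  consider "X' 0 > 0" | "X' 0 < 0" | "X' 0 = 0" by linarith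
  then show ?thesis
  proof cases
    case 1
    from DERIV_pos_inc_right[OF X'[OF \<open>0 \<in> _\<close>] 1] obtain d where
      "d > 0" "\<And>h. h > 0 \<Longrightarrow> h < d \<Longrightarrow> X 0 < X h" by auto
    then show ?thesis using \<open>e > 0\<close> by (intro bexI[of _ "min d e / 2"]) auto
  next
    case 2
    from DERIV_neg_dec_left[OF X'[OF \<open>0 \<in> _\<close>] 2] obtain d where
      "d > 0" "\<And>h. h > 0 \<Longrightarrow> h < d \<Longrightarrow> X 0 < X (- h)" by auto
    then show ?thesis using \<open>e > 0\<close> by (intro bexI[of _ "- (min d e / 2)"]) auto
  next
    case 3
    from DERIV_pos_inc_right[OF X''[OF \<open>0 \<in> _\<close>] critical[OF 3]] obtain d where
      d: "d > 0" "\<And>h. h > 0 \<Longrightarrow> h < d \<Longrightarrow> X' 0 < X' h" by auto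
    define h where "h = min d e / 2"
    have h: "0 < h" "h < d" "h < e" using d \<open>e > 0\<close> by (auto simp: h_def)
    obtain w where w: "0 < w" "w < h" "X h - X 0 = h * X' w"
      using MVT2[of 0 h X X'] h X' by force
    have "X' w > 0" using d(2)[of w] w h 3 by auto
    then have "X h > X 0" using w h by (simp add: algebra_simps)
    then show ?thesis using h by (intro bexI[of _ h]) auto
  qed
qed

lemma threshold_near_one:
  fixes G B :: real
  assumes "G > 0" "B > 0"
  shows "\<exists>a0. 0 < a0 \<and> a0 < 1 \<and> (\<forall>a. a0 \<le> a \<and> a < 1 \<longrightarrow> sqrt (1 - a\<^sup>2) * B < G * a)"
proof -
  define d where "d = min (1/2) (G / (4 * B))"
  have d: "0 < d" "d \<le> 1/2" "4 * d * B \<le> G"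
    using assms by (auto simp: d_def min_def field_simps)
  define a0 where "a0 = sqrt (1 - d\<^sup>2)"
  have "d\<^sup>2 \<le> 1/4" using d power_mono[of d "1/2" 2] by (simp add: power_divide)
  then have "(1/2)\<^sup>2 < 1 - d\<^sup>2" "a0\<^sup>2 = 1 - d\<^sup>2"
    unfolding a0_def by (auto simp: power_divide)
  then have "a0 > 1/2" unfolding a0_def by (intro real_less_rsqrt) auto
  moreover have "a0 < 1" unfolding a0_def using d real_sqrt_less_mono[of "1 - d\<^sup>2" 1] by simp
  moreover have "sqrt (1 - a\<^sup>2) * B < G * a" if "a0 \<le> a" for a
  proof -
    have "a0\<^sup>2 \<le> a\<^sup>2" using that \<open>a0 > 1/2\<close> by (intro power_mono) auto
    then have "sqrt (1 - a\<^sup>2) \<le> d"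
      using \<open>a0\<^sup>2 = 1 - d\<^sup>2\<close> d real_sqrt_le_mono[of "1 - a\<^sup>2" "d\<^sup>2"] by simp
    then have "sqrt (1 - a\<^sup>2) * B \<le> d * B"
      using assms by (intro mult_right_mono) auto
    also have "\<dots> \<le> G / 4" using d by simp
    also have "\<dots> < G * a" using assms \<open>a0 > 1/2\<close> that by simp
    finally show ?thesis .
  qed
  ultimately show ?thesis by (intro exI[of _ a0]) auto
qed

lemma vfield_acceleration_outward:
  assumes "\<bar>x\<bar> = a" "0 < a" "a < 1" and lam: "lam \<in> {0..1}" and F: "\<bar>F t\<bar> \<le> B"
    and threshold: "sqrt (1 - a\<^sup>2) * B < G * a"
  shows "x * snd (snd (vfield G F lam (t, x, 0))) > 0"
proof -
  define s where "s = sqrt (1 - a\<^sup>2)"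
  have "a\<^sup>2 < 1" using assms by (simp add: abs_square_less_1)
  then have s: "s > 0" "s\<^sup>2 = 1 - a\<^sup>2" by (auto simp: s_def)
  have x2: "x\<^sup>2 = a\<^sup>2" using \<open>\<bar>x\<bar> = a\<close> by (metis power2_abs)
  have "\<bar>lam * F t\<bar> \<le> 1 * B"
    using lam F unfolding abs_mult by (intro mult_mono) auto
  then have "\<bar>x * (lam * F t)\<bar> \<le> a * B"
    using \<open>\<bar>x\<bar> = a\<close> by (simp add: abs_mult mult_left_mono)
  have accel: "snd (snd (vfield G F lam (t, x, 0))) = G * s * x - s\<^sup>2 * (lam * F t)"
    using s(2) unfolding s_def by (simp add: vfield_def x2)
  have "s * (x * (lam * F t)) \<le> s * (a * B)"
    using s \<open>\<bar>x * (lam * F t)\<bar> \<le> a * B\<close> by (intro mult_left_mono) auto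
  moreover have "s * (a * B) < G * a\<^sup>2"
    using threshold \<open>0 < a\<close> by (simp add: s_def power2_eq_square mult_ac)
  ultimately have "G * a\<^sup>2 - s * (x * (lam * F t)) > 0" by linarith
  moreover have "x * snd (snd (vfield G F lam (t, x, 0))) = s * (G * a\<^sup>2 - s * (x * (lam * F t)))"
    unfolding accel x2[symmetric] by (simp add: power2_eq_square algebra_simps)
  ultimately show ?thesis using s by simp
qed

lemma solution_leaves_strip:
  fixes v :: "real \<times> real \<times> real \<Rightarrow> real \<times> real \<times> real"
  assumes "a > 0" "e > 0"
    and velocity: "\<And>t x p. fst (snd (v (t, x, p))) = p"
    and outward: "\<And>t x. \<bar>x\<bar> = a \<Longrightarrow> x * snd (snd (v (t, x, 0))) > 0"
    and sol: "is_solution v D y {-e<..<e}"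
    and start: "\<bar>fst (snd (y 0))\<bar> = a"
  shows "\<exists>s\<in>{-e<..<e}. \<bar>fst (snd (y s))\<bar> > a"
proof -
  define X where "X s = fst (snd (y s))" for s
  define P where "P s = snd (snd (y s))" for s
  define Q where "Q s = snd (snd (v (y s)))" for s
  have dsnd: "((\<lambda>s. snd (y s)) has_vector_derivative snd (v (y s))) (at s)"
    if "s \<in> {-e<..<e}" for s
    using sol that unfolding is_solution_def
    by (metis at_within_open open_greaterThanLessThan bounded_linear.has_vector_derivative[OF bounded_linear_snd])
  have "fst (snd (v (y s))) = P s" for s
    unfolding P_def by (metis velocity prod.collapse)
  then have dX: "(X has_real_derivative P s) (at s)" if "s \<in> {-e<..<e}" for s
    using bounded_linear.has_vector_derivative[OF bounded_linear_fst dsnd[OF that]]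
    unfolding X_def has_real_derivative_iff_has_vector_derivative by simp
  have dP: "(P has_real_derivative Q s) (at s)" if "s \<in> {-e<..<e}" for s
    using bounded_linear.has_vector_derivative[OF bounded_linear_snd dsnd[OF that]]
    unfolding P_def Q_def has_real_derivative_iff_has_vector_derivative .
  have X0: "\<bar>X 0\<bar> = a" using start by (simp add: X_def)
  have "\<exists>s\<in>{-e<..<e}. (X s)\<^sup>2 > (X 0)\<^sup>2"
  proof (rule DERIV2_not_local_max[OF \<open>e > 0\<close>])
    show "((\<lambda>s. (X s)\<^sup>2) has_real_derivative 2 * X s * P s) (at s)" if "s \<in> {-e<..<e}" for s
      using DERIV_power[OF dX[OF that], of 2] by (simp add: mult_ac)
    show "((\<lambda>s. 2 * X s * P s) has_real_derivative 2 * (P s * P s + X s * Q s)) (at s)"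
      if "s \<in> {-e<..<e}" for s
      using DERIV_mult[OF DERIV_cmult[OF dX[OF that], of 2] dP[OF that]]
      by (simp add: algebra_simps)
    assume "2 * X 0 * P 0 = 0"
    then have "P 0 = 0" using X0 \<open>a > 0\<close> by auto
    then have "y 0 = (fst (y 0), X 0, 0)" unfolding X_def P_def by (metis prod.collapse)
    then have "X 0 * Q 0 > 0" using outward[OF X0] unfolding Q_def by metis
    then show "2 * (P 0 * P 0 + X 0 * Q 0) > 0" using \<open>P 0 = 0\<close> by simp
  qed
  then show ?thesis using X0 unfolding X_def by (metis abs_le_square_iff not_le)
qed

lemma bound_set_strip:
  fixes v :: "real \<times> real \<times> real \<Rightarrow> real \<times> real \<times> real"
  assumes "a > 0"
    and velocity: "\<And>t x p. fst (snd (v (t, x, p))) = p"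
    and outward: "\<And>t x. \<bar>x\<bar> = a \<Longrightarrow> x * snd (snd (v (t, x, 0))) > 0"
  shows "bound_set v D (UNIV \<times> Gamma a)"
proof -
  have strip: "UNIV \<times> Gamma a = {z. \<bar>fst (snd z)\<bar> \<le> a}"
    by (auto simp: Gamma_def)
  have "frontier (UNIV \<times> Gamma a) \<subseteq> {z. \<bar>fst (snd z)\<bar> = a}"
    unfolding strip by (intro frontier_sublevel_subset continuous_intros)
  then have "\<not> (\<forall>s\<in>{-e<..<e}. y s \<in> UNIV \<times> Gamma a)"
    if "e > 0" "is_solution v D y {-e<..<e}" "y 0 \<in> frontier (UNIV \<times> Gamma a)" for e y
    using solution_leaves_strip[OF \<open>a > 0\<close> that(1) velocity outward that(2)] that(3)
    unfolding strip by force
  moreover have "closed (UNIV \<times> Gamma a)"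
    unfolding strip by (intro closed_Collect_le continuous_intros)
  ultimately show ?thesis unfolding bound_set_def by blast
qed

theorem lemma3p1:
  fixes G T :: real and F :: "real \<Rightarrow> real"
  assumes "G > 0" and "T > 0" and "continuous_on UNIV F" and "\<And>t. F (t + T) = F t"
  shows "\<exists>a0. 0 < a0 \<and> a0 < 1 \<and>
           (\<forall>a. a0 \<le> a \<and> a < 1 \<longrightarrow>
              (\<forall>lam\<in>{0..1}. bound_set (vfield G F lam) (UNIV \<times> Omega) (UNIV \<times> Gamma a)))"
proof -
  obtain B where "B > 0" and B: "\<And>t. \<bar>F t\<bar> \<le> B"
    using periodic_continuous_bounded[OF assms(2-4)]
    by (metis bounded_pos rangeI real_norm_def)
  obtain a0 where a0: "0 < a0" "a0 < 1"
    and threshold: "\<And>a. a0 \<le> a \<Longrightarrow> a < 1 \<Longrightarrow> sqrt (1 - a\<^sup>2) * B < G * a"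
    using threshold_near_one[OF \<open>G > 0\<close> \<open>B > 0\<close>] by blast
  have "bound_set (vfield G F lam) (UNIV \<times> Omega) (UNIV \<times> Gamma a)"
    if "a0 \<le> a" "a < 1" "lam \<in> {0..1}" for a lam
  proof (rule bound_set_strip)
    show "a > 0" using a0 that by linarith
    show "fst (snd (vfield G F lam (t, x, p))) = p" for t x p
      by (simp add: vfield_def)
    show "x * snd (snd (vfield G F lam (t, x, 0))) > 0" if "\<bar>x\<bar> = a" for t x
      using B threshold[OF \<open>a0 \<le> a\<close> \<open>a < 1\<close>] a0 \<open>a0 \<le> a\<close> \<open>a < 1\<close> \<open>lam \<in> {0..1}\<close>
      by (intro vfield_acceleration_outward[where B = B, OF that]) auto
  qed
  then show ?thesis using a0 by blast
qed

end
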